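(* For every $\Gamma\subseteq\mathcal{L}_{\Box\!\!\rightarrow}$, we have $(\Gamma,\emptyset)\notin\mathsf{N4CK}$; i.e. every set of formulas of $\mathcal{L}_{\Box\!\!\rightarrow}$ is verified at some point of some Nelsonian conditional model.
   Context: Let $\mathcal{L}_{\Box\!\!\rightarrow}$ be the language built from propositional variables $p_0,p_1,\dots$ with binary $\wedge,\vee,\to$, unary strong negation $\sim$, and a binary would-conditional $\Box\!\!\rightarrow$. A Nelsonian conditional model is $\mathcal{M}=(W,\leq,R,V^+,V^-)$ where $W\neq\emptyset$, $\leq$ is a preorder on $W$, $V^+,V^-$ map each variable to a $\leq$-upward-closed subset of $W$, and $R\subseteq W\times(\mathcal{P}(W)\times\mathcal{P}(W))\times W$ (write $R_{(X,Y)}(w,v)$ for $(w,(X,Y),v)\in R$) satisfies for all $X,Y\subseteq W$: (c1) if $w\leq w'$ and $R_{(X,Y)}(w,v)$ then $R_{(X,Y)}(w',v')$ for some $v'\geq v$; (c2) if $R_{(X,Y)}(w,v)$ and $v\leq v'$ then $R_{(X,Y)}(w',v')$ for some $w'\geq w$. Verification $\models^+$ and falsification $\models^-$ are defined inductively: $w\models^\pm p$ iff $w\in V^\pm(p)$; $\wedge$: verified iff both conjuncts verified, falsified iff one is falsified; $\vee$: verified iff one disjunct verified, falsified iff both falsified; $w\models^+\sim\psi$ iff $w\models^-\psi$ and $w\models^-\sim\psi$ iff $w\models^+\psi$; $w\models^+\psi\to\chi$ iff for all $v\geq w$, $v\models^+\psi$ implies $v\models^+\chi$; $w\models^-\psi\to\chi$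 iff $w\models^+\psi$ and $w\models^-\chi$; $w\models^+\psi\Box\!\!\rightarrow\chi$ iff for all $v\geq w$ and all $u$ with $R_{\|\psi\|_\mathcal{M}}(v,u)$, $u\models^+\chi$; $w\models^-\psi\Box\!\!\rightarrow\chi$ iff some $u$ has $R_{\|\psi\|_\mathcal{M}}(w,u)$ and $u\models^-\chi$; here $\|\psi\|_\mathcal{M}=(\{w\mid w\models^+\psi\},\{w\mid w\models^-\psi\})$. $\mathsf{N4CK}$ is the set of pairs $(\Gamma,\Delta)$ of sets of formulas such that no pointed model verifies all members of $\Gamma$ while verifying no member of $\Delta$. *)

theory Defs
  imports Main
begin

datatype form =
    Var nat
  | Conj form form
  | Disj form form
  | Imp form form
  | SNeg form
  | Cond form form

text \<open>A Nelsonian conditional model with worlds of type 'w.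
  R (X,Y) w v stands for R_(X,Y)(w,v).\<close>
record 'w ncmodel =
  W :: "'w set"
  le :: "'w \<Rightarrow> 'w \<Rightarrow> bool"
  R :: "'w set \<times> 'w set \<Rightarrow> 'w \<Rightarrow> 'w \<Rightarrow> bool"
  Vp :: "nat \<Rightarrow> 'w set"
  Vm :: "nat \<Rightarrow> 'w set"

definition upclosed :: "'w ncmodel \<Rightarrow> 'w set \<Rightarrow> bool" where
  "upclosed M A \<longleftrightarrow> A \<subseteq> W M \<and>
     (\<forall>w\<in>A. \<forall>v\<in>W M. le M w v \<longrightarrow> v \<in> A)"

definition is_model :: "'w ncmodel \<Rightarrow> bool" where
  "is_model M \<longleftrightarrow>
     W M \<noteq> {} \<and>
     (\<forall>w\<in>W M. le M w w) \<and>
     (\<forall>u\<in>W M. \<forall>v\<in>W M. \<forall>w\<in>W M. le M u v \<longrightarrow> le M v w \<longrightarrow> le M u w) \<and>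
     (\<forall>p. upclosed M (Vp M p) \<and> upclosed M (Vm M p)) \<and>
     (\<forall>X Y w v. R M (X,Y) w v \<longrightarrow> w \<in> W M \<and> v \<in> W M) \<and>
     (\<forall>X Y. X \<subseteq> W M \<longrightarrow> Y \<subseteq> W M \<longrightarrow>
        (\<forall>w\<in>W M. \<forall>w'\<in>W M. \<forall>v\<in>W M. le M w w' \<longrightarrow> R M (X,Y) w v \<longrightarrow>
            (\<exists>v'\<in>W M. le M v v' \<and> R M (X,Y) w' v')) \<and>
        (\<forall>w\<in>W M. \<forall>v\<in>W M. \<forall>v'\<in>W M. R M (X,Y) w v \<longrightarrow> le M v v' \<longrightarrow>
            (\<exists>w'\<in>W M. le M w w' \<and> R M (X,Y) w' v')))"

text \<open>sat M True w A: w verifies A;  sat M False w A: w falsifies A.\<close>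
fun sat :: "'w ncmodel \<Rightarrow> bool \<Rightarrow> 'w \<Rightarrow> form \<Rightarrow> bool" where
  "sat M True w (Var p) = (w \<in> Vp M p)"
| "sat M False w (Var p) = (w \<in> Vm M p)"
| "sat M True w (Conj a b) = (sat M True w a \<and> sat M True w b)"
| "sat M False w (Conj a b) = (sat M False w a \<or> sat M False w b)"
| "sat M True w (Disj a b) = (sat M True w a \<or> sat M True w b)"
| "sat M False w (Disj a b) = (sat M False w a \<and> sat M False w b)"
| "sat M True w (SNeg a) = sat M False w a"
| "sat M False w (SNeg a) = sat M True w a"
| "sat M True w (Imp a b) =
     (\<forall>v\<in>W M. le M w v \<longrightarrow> sat M True v a \<longrightarrow> sat M True v b)"
| "sat M False w (Imp a b) = (sat M True w a \<and> sat M False w b)"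
| "sat M True w (Cond a b) =
     (\<forall>v\<in>W M. le M w v \<longrightarrow>
        (\<forall>u. R M ({x\<in>W M. sat M True x a}, {x\<in>W M. sat M False x a}) v u \<longrightarrow> sat M True u b))"
| "sat M False w (Cond a b) =
     (\<exists>u. R M ({x\<in>W M. sat M True x a}, {x\<in>W M. sat M False x a}) w u \<and> sat M False u b)"

text \<open>N4CK relative to models whose worlds are drawn from the type 'w.\<close>
definition N4CK :: "'w itself \<Rightarrow> (form set \<times> form set) set" where
  "N4CK _ = {(\<Gamma>, \<Delta>). \<not> (\<exists>(M::'w ncmodel) w. is_model M \<and> w \<in> W M \<and>
        (\<forall>A\<in>\<Gamma>. sat M True w A) \<and> (\<forall>B\<in>\<Delta>. \<not> sat M True w B))}"

end

theory Submission
  imports Defs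
begin

text \<open>Make every variable both verified and falsified everywhere and all relations total. Then
  every formula is both verified and falsified at every world, since each clause of the
  semantics is satisfied by such a glut, so this single model verifies every set of formulas.\<close>

definition glut_model :: "'w ncmodel" where
  "glut_model = \<lparr>W = UNIV, le = (\<lambda>_ _. True), R = (\<lambda>_ _ _. True),
                 Vp = (\<lambda>_. UNIV), Vm = (\<lambda>_. UNIV)\<rparr>"

lemma is_model_glut_model: "is_model glut_model"
  by (auto simp: is_model_def upclosed_def glut_model_def)

lemma sat_glut_model: "sat glut_model True w A \<and> sat glut_model False w A"
  by (induction A arbitrary: w) (auto simp: glut_model_def)

theorem proposition6:
  fixes \<Gamma> :: "form set"
  shows "(\<Gamma>, {}) \<notin> N4CK TYPE('w)"
proof -
  let ?M = "glut_model :: 'w ncmodel"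
  obtain w where "w \<in> W ?M"
    by (simp add: glut_model_def)
  moreover have "\<forall>A\<in>\<Gamma>. sat ?M True w A"
    by (simp add: sat_glut_model)
  ultimately show ?thesis
    using is_model_glut_model unfolding N4CK_def by blast
qed

end
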